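(* For any graph $H$ and any positive integer $r$, $H$ is (isomorphic to) a subgraph of $G(\mathbb{Z}^2, \sqrt{r})$ if and only if $H$ is (isomorphic to) a subgraph of $G(\mathbb{Z}^2, \sqrt{2r})$.
   Context: For $X \subseteq \mathbb{R}^m$ and $d>0$, $G(X,d)$ denotes the Euclidean distance graph with vertex set $X$ in which two vertices are adjacent if and only if their Euclidean distance is exactly $d$. *)

theory Defs
  imports "HOL-Analysis.Analysis"
begin

definition simple_graph :: "'a set \<Rightarrow> ('a \<Rightarrow> 'a \<Rightarrow> bool) \<Rightarrow> bool" where
  "simple_graph V E \<longleftrightarrow> finite V \<and>
     (\<forall>u v. E u v \<longrightarrow> u \<in> V \<and> v \<in> V \<and> u \<noteq> v \<and> E v u)"

definition edg_adj :: "'b::euclidean_space set \<Rightarrow> real \<Rightarrow> 'b \<Rightarrow> 'b \<Rightarrow> bool" where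
  "edg_adj X d x y \<longleftrightarrow> x \<in> X \<and> y \<in> X \<and> dist x y = d"

definition Z2 :: "(real^2) set" where
  "Z2 = {x. \<forall>i. x $ i \<in> \<int>}"

definition subgraph_of_edg :: "'a set \<Rightarrow> ('a \<Rightarrow> 'a \<Rightarrow> bool) \<Rightarrow> 'b::euclidean_space set \<Rightarrow> real \<Rightarrow> bool" where
  "subgraph_of_edg V E X d \<longleftrightarrow>
     (\<exists>f. inj_on f V \<and> f ` V \<subseteq> X \<and> (\<forall>u\<in>V. \<forall>v\<in>V. E u v \<longrightarrow> edg_adj X d (f u) (f v)))"

end

theory Submission
  imports Defs
begin

text \<open>
  The map \<open>(a, b) \<mapsto> (a - b, a + b)\<close>, a rotation by
  45 degrees scaled by \<open>\<surd>2\<close>, is a bijection from \<open>\<int>\<^sup>2\<close> onto the checkerboard lattice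
  \<open>{(a, b). a + b even}\<close> that doubles squared distances. So an embedding at \<open>\<surd>n\<close> gives
  one at \<open>\<surd>(2n)\<close>; conversely, since \<open>a\<^sup>2 + b\<^sup>2 \<equiv> a + b (mod 2)\<close>, edges of squared
  length \<open>2n\<close> never leave a coset of the checkerboard lattice, so after translating the
  vertices in the odd coset far enough by an odd horizontal vector the whole embedding
  lies in the checkerboard lattice and can be rotated back.
\<close>

definition lattice_point :: "int \<times> int \<Rightarrow> real^2" where
  "lattice_point x = vector [of_int (fst x), of_int (snd x)]"

definition sq_dist :: "int \<times> int \<Rightarrow> int \<times> int \<Rightarrow> int" where
  "sq_dist x y = (fst x - fst y)^2 + (snd x - snd y)^2"

definition lattice_embedding ::
    "'a set \<Rightarrow> ('a \<Rightarrow> 'a \<Rightarrow> bool) \<Rightarrow> (int \<times> int) set \<Rightarrow> int \<Rightarrow> bool" where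
  "lattice_embedding V E L n \<longleftrightarrow>
     (\<exists>f. inj_on f V \<and> f ` V \<subseteq> L \<and> (\<forall>u\<in>V. \<forall>v\<in>V. E u v \<longrightarrow> sq_dist (f u) (f v) = n))"

definition rot45 :: "int \<times> int \<Rightarrow> int \<times> int" where
  "rot45 x = (fst x - snd x, fst x + snd x)"

definition checkerboard :: "(int \<times> int) set" where
  "checkerboard = {x. even (fst x + snd x)}"

lemma inj_lattice_point: "inj lattice_point"
  by (rule injI) (simp add: lattice_point_def vec_eq_iff forall_2 prod_eq_iff)

lemma range_lattice_point: "range lattice_point = Z2"
proof
  show "range lattice_point \<subseteq> Z2"
    by (auto simp: lattice_point_def Z2_def forall_2)
  show "Z2 \<subseteq> range lattice_point"
  proof
    fix x assume "x \<in> Z2"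
    then have "x = lattice_point (\<lfloor>x$1\<rfloor>, \<lfloor>x$2\<rfloor>)"
      by (simp add: Z2_def lattice_point_def vec_eq_iff forall_2)
    then show "x \<in> range lattice_point" by blast
  qed
qed

lemma dist_lattice_point_eq_sqrt_iff:
  "dist (lattice_point x) (lattice_point y) = sqrt (real n) \<longleftrightarrow> sq_dist x y = int n"
proof -
  have "dist (lattice_point x) (lattice_point y) = sqrt (of_int (sq_dist x y))"
    by (simp add: lattice_point_def sq_dist_def dist_vec_def L2_set_def sum_2 dist_real_def)
  then show ?thesis
    by (metis of_int_eq_iff of_int_of_nat_eq real_sqrt_eq_iff)
qed

lemma subgraph_of_edg_Z2_iff_lattice_embedding:
  "subgraph_of_edg V E Z2 (sqrt (real n)) \<longleftrightarrow> lattice_embedding V E UNIV (int n)"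
proof
  assume "subgraph_of_edg V E Z2 (sqrt (real n))"
  then obtain f where f: "inj_on f V" "f ` V \<subseteq> Z2"
      and edges: "\<And>u v. u \<in> V \<Longrightarrow> v \<in> V \<Longrightarrow> E u v \<Longrightarrow> dist (f u) (f v) = sqrt (real n)"
    by (auto simp: subgraph_of_edg_def edg_adj_def)
  define g where "g = inv lattice_point \<circ> f"
  have f_eq: "lattice_point (g v) = f v" if "v \<in> V" for v
    using f(2) that unfolding g_def range_lattice_point[symmetric]
    by (simp add: f_inv_into_f image_subset_iff)
  have "inj_on g V"
    using f(1) unfolding inj_on_def by (metis f_eq)
  moreover have "sq_dist (g u) (g v) = int n" if "u \<in> V" "v \<in> V" "E u v" for u v
    using edges[OF that] by (simp add: f_eq that flip: dist_lattice_point_eq_sqrt_iff)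
  ultimately show "lattice_embedding V E UNIV (int n)"
    unfolding lattice_embedding_def by blast
next
  assume "lattice_embedding V E UNIV (int n)"
  then obtain g where g: "inj_on g V"
      and edges: "\<And>u v. u \<in> V \<Longrightarrow> v \<in> V \<Longrightarrow> E u v \<Longrightarrow> sq_dist (g u) (g v) = int n"
    by (auto simp: lattice_embedding_def)
  have "inj_on (lattice_point \<circ> g) V"
    using g inj_lattice_point by (auto intro: comp_inj_on inj_on_subset)
  moreover have "(lattice_point \<circ> g) ` V \<subseteq> Z2"
    by (auto simp flip: range_lattice_point)
  moreover have "edg_adj Z2 (sqrt (real n)) (lattice_point (g u)) (lattice_point (g v))"
    if "u \<in> V" "v \<in> V" "E u v" for u v
    by (auto simp: edg_adj_def dist_lattice_point_eq_sqrt_iff edges[OF that]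
        simp flip: range_lattice_point)
  ultimately show "subgraph_of_edg V E Z2 (sqrt (real n))"
    unfolding subgraph_of_edg_def comp_def by blast
qed

lemma lattice_embedding_mono:
  "L \<subseteq> L' \<Longrightarrow> lattice_embedding V E L n \<Longrightarrow> lattice_embedding V E L' n"
  unfolding lattice_embedding_def by blast

lemma sq_dist_rot45: "sq_dist (rot45 x) (rot45 y) = 2 * sq_dist x y"
  by (simp add: rot45_def sq_dist_def power2_eq_square algebra_simps)

lemma inj_rot45: "inj rot45"
  by (rule injI) (auto simp: rot45_def prod_eq_iff)

lemma range_rot45: "range rot45 = checkerboard"
proof
  show "range rot45 \<subseteq> checkerboard"
    by (auto simp: rot45_def checkerboard_def)
  show "checkerboard \<subseteq> range rot45"
  proof
    fix x :: "int \<times> int" assume "x \<in> checkerboard"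
    then obtain k where "fst x + snd x = 2 * k"
      unfolding checkerboard_def by (blast elim: evenE)
    then have "x = rot45 (k, k - fst x)"
      by (simp add: rot45_def prod_eq_iff)
    then show "x \<in> range rot45" by blast
  qed
qed

lemma lattice_embedding_rot45_iff:
  "lattice_embedding V E (rot45 ` L) (2 * n) \<longleftrightarrow> lattice_embedding V E L n"
proof
  assume "lattice_embedding V E (rot45 ` L) (2 * n)"
  then obtain f where f: "inj_on f V" "f ` V \<subseteq> rot45 ` L"
      and edges: "\<And>u v. u \<in> V \<Longrightarrow> v \<in> V \<Longrightarrow> E u v \<Longrightarrow> sq_dist (f u) (f v) = 2 * n"
    by (auto simp: lattice_embedding_def)
  define g where "g = inv rot45 \<circ> f"
  have f_eq: "f v = rot45 (g v)" and g_in: "g v \<in> L" if "v \<in> V" for v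
    using f(2) that inj_rot45 by (auto simp: g_def)
  have "inj_on g V"
    using f(1) unfolding inj_on_def by (metis f_eq)
  moreover have "sq_dist (g u) (g v) = n" if "u \<in> V" "v \<in> V" "E u v" for u v
    using edges[OF that] by (simp add: f_eq that sq_dist_rot45)
  ultimately show "lattice_embedding V E L n"
    unfolding lattice_embedding_def using g_in by blast
next
  assume "lattice_embedding V E L n"
  then obtain g where "inj_on g V" "g ` V \<subseteq> L"
      and edges: "\<And>u v. u \<in> V \<Longrightarrow> v \<in> V \<Longrightarrow> E u v \<Longrightarrow> sq_dist (g u) (g v) = n"
    by (auto simp: lattice_embedding_def)
  then have "inj_on (rot45 \<circ> g) V" "(rot45 \<circ> g) ` V \<subseteq> rot45 ` L"
    using inj_rot45 by (auto intro: comp_inj_on inj_on_subset)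
  then show "lattice_embedding V E (rot45 ` L) (2 * n)"
    unfolding lattice_embedding_def using edges
    by (intro exI[of _ "rot45 \<circ> g"]) (auto simp: sq_dist_rot45)
qed

lemma checkerboard_iff_if_even_sq_dist:
  "even (sq_dist x y) \<Longrightarrow> x \<in> checkerboard \<longleftrightarrow> y \<in> checkerboard"
  by (simp add: sq_dist_def checkerboard_def) blast

lemma lattice_embedding_into_checkerboard:
  assumes "finite V" "even n" "lattice_embedding V E UNIV n"
  shows "lattice_embedding V E checkerboard n"
proof -
  obtain f where f: "inj_on f V"
      and edges: "\<And>u v. u \<in> V \<Longrightarrow> v \<in> V \<Longrightarrow> E u v \<Longrightarrow> sq_dist (f u) (f v) = n"
    using assms(3) by (auto simp: lattice_embedding_def)
  define M where "M = Max ((\<lambda>v. \<bar>fst (f v)\<bar>) ` V)"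
  have M: "\<bar>fst (f v)\<bar> \<le> M" if "v \<in> V" for v
    using assms(1) that by (simp add: M_def)
  define shift where "shift x = (fst x + 2 * M + 1, snd x)" for x :: "int \<times> int"
  define g where "g v = (if f v \<in> checkerboard then f v else shift (f v))" for v
  have "inj shift"
    by (rule injI) (simp add: shift_def prod_eq_iff)
  have no_collision: "shift (f u) \<noteq> f v" if "u \<in> V" "v \<in> V" for u v
    using M[OF that(1)] M[OF that(2)] by (auto simp: shift_def prod_eq_iff)
  have "g ` V \<subseteq> checkerboard"
    by (auto simp: g_def shift_def checkerboard_def)
  moreover have "inj_on g V"
  proof (rule inj_onI)
    fix u v assume "u \<in> V" "v \<in> V" "g u = g v"
    then have "f u = f v"
      using no_collision \<open>inj shift\<close> by (auto simp: g_def inj_eq split: if_splits) metis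
    with f show "u = v"
      using \<open>u \<in> V\<close> \<open>v \<in> V\<close> by (rule inj_onD)
  qed
  moreover have "sq_dist (g u) (g v) = n" if uv: "u \<in> V" "v \<in> V" "E u v" for u v
  proof -
    have "f u \<in> checkerboard \<longleftrightarrow> f v \<in> checkerboard"
      using checkerboard_iff_if_even_sq_dist edges[OF uv] assms(2) by blast
    then have "sq_dist (g u) (g v) = sq_dist (f u) (f v)"
      by (auto simp: g_def shift_def sq_dist_def)
    with edges[OF uv] show ?thesis by simp
  qed
  ultimately show ?thesis
    unfolding lattice_embedding_def by blast
qed

lemma lattice_embedding_double_iff:
  assumes "finite V"
  shows "lattice_embedding V E UNIV (2 * n) \<longleftrightarrow> lattice_embedding V E UNIV n"
proof
  assume "lattice_embedding V E UNIV (2 * n)"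
  then have "lattice_embedding V E checkerboard (2 * n)"
    by (intro lattice_embedding_into_checkerboard assms) simp
  then show "lattice_embedding V E UNIV n"
    by (simp only: lattice_embedding_rot45_iff flip: range_rot45)
next
  assume "lattice_embedding V E UNIV n"
  then have "lattice_embedding V E (range rot45) (2 * n)"
    by (simp only: lattice_embedding_rot45_iff)
  then show "lattice_embedding V E UNIV (2 * n)"
    by (rule lattice_embedding_mono[rotated]) simp
qed

theorem theorem1:
  fixes V :: "'a set" and E :: "'a \<Rightarrow> 'a \<Rightarrow> bool" and r :: nat
  assumes "simple_graph V E" and "r > 0"
  shows "subgraph_of_edg V E Z2 (sqrt (real r)) \<longleftrightarrow> subgraph_of_edg V E Z2 (sqrt (2 * real r))"
proof -
  have "finite V"
    using assms(1) by (simp add: simple_graph_def)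
  have "subgraph_of_edg V E Z2 (sqrt (real r)) \<longleftrightarrow> lattice_embedding V E UNIV (int r)"
    by (rule subgraph_of_edg_Z2_iff_lattice_embedding)
  also have "\<dots> \<longleftrightarrow> lattice_embedding V E UNIV (2 * int r)"
    using lattice_embedding_double_iff[OF \<open>finite V\<close>] by simp
  also have "\<dots> \<longleftrightarrow> subgraph_of_edg V E Z2 (sqrt (2 * real r))"
    using subgraph_of_edg_Z2_iff_lattice_embedding[of V E "2 * r"] by simp
  finally show ?thesis .
qed

end
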